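(* Let $M=(m_{ij})$ be an $n\times n$ homogeneous, well-ordered integer matrix of degree $d$, and let $M'$ be the $(n-1)\times n$ matrix obtained from $M$ by erasing the first row. Assume there exists a zero-dimensional subscheme $Z\subset\mathbb{P}^2$ having a degree Hilbert-Burch matrix equal to $M'$. Then the Hilbert function of $Z$ in degree $d-1$ equals the degree of $Z$.
   Context: A matrix of integers is homogeneous if every $2\times2$ submatrix $\begin{pmatrix} a&b\\ c&e\end{pmatrix}$ satisfies $a+e=b+c$; the degree of a square homogeneous matrix is $\sum_i m_{i\sigma(i)}$, independent of $\sigma$. Well-ordered: for $i'>i$, $j'>j$, $m_{i'j}\le m_{ij}$ and $m_{ij'}\ge m_{ij}$. For a zero-dimensional subscheme $Z\subset\mathbb{P}^2$, a degree Hilbert-Burch (dHB) matrix of $Z$ is the integer matrix $(b_i-a_j)$ arising from a (not necessarily minimal) free resolution $0\to\bigoplus_{i=1}^{n-1}\mathcal{O}(-b_i)\xrightarrow{A}\bigoplus_{j=1}^{n}\mathcal{O}(-a_j)\to\mathcal{I}_Z\to0$, where $A=(f_{ij})$ has $\deg f_{ij}=b_i-a_j$, $b_1\ge\dots\ge b_{n-1}$, $a_1\ge\dots\ge a_n$. The Hilbert function of $Z$ is $Hf_Z(t)=\dim_{\mathbb{C}}(\mathbb{C}[x_0,x_1,x_2]/I_Z)_t$, $I_Z$ the homogeneous ideal of $Z$. *)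

theory Defs
  imports Complex_Main "HOL-Library.Poly_Mapping" "HOL-Library.Product_Plus"
begin

text \<open>The homogeneous coordinate ring S = C[x0,x1,x2]: a monomial x0^a x1^b x2^c is the
  exponent triple (a,b,c); a polynomial is a finitely supported map from exponents to C.\<close>

type_synonym mono3 = "nat \<times> nat \<times> nat"
type_synonym poly3 = "mono3 \<Rightarrow>\<^sub>0 complex"

definition mdeg :: "mono3 \<Rightarrow> nat" where
  "mdeg m = fst m + fst (snd m) + snd (snd m)"

definition sc :: "complex \<Rightarrow> poly3 \<Rightarrow> poly3" where
  "sc c p = Poly_Mapping.single (0::mono3) c * p"

text \<open>p is homogeneous of (integer) degree d; the zero polynomial is homogeneous of every
  degree, and only 0 is homogeneous of negative degree.\<close>
definition hom :: "poly3 \<Rightarrow> int \<Rightarrow> bool" where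
  "hom p d \<longleftrightarrow> (\<forall>m\<in>Poly_Mapping.keys p. int (mdeg m) = d)"

definition var :: "nat \<Rightarrow> poly3" where
  "var i = Poly_Mapping.single (if i = 0 then (1,0,0) else if i = 1 then (0,1,0) else (0,0,1)) 1"

definition hcomp :: "poly3 \<Rightarrow> nat \<Rightarrow> poly3" where
  "hcomp p t = (\<Sum>m\<in>{m\<in>Poly_Mapping.keys p. mdeg m = t}. Poly_Mapping.single m (Poly_Mapping.lookup p m))"

definition is_ideal :: "poly3 set \<Rightarrow> bool" where
  "is_ideal I \<longleftrightarrow> 0 \<in> I \<and> (\<forall>p\<in>I. \<forall>q\<in>I. p + q \<in> I) \<and> (\<forall>p\<in>I. \<forall>r. r * p \<in> I)"

definition homogeneous_ideal :: "poly3 set \<Rightarrow> bool" where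
  "homogeneous_ideal I \<longleftrightarrow> is_ideal I \<and> (\<forall>p\<in>I. \<forall>t. hcomp p t \<in> I)"

definition saturated :: "poly3 set \<Rightarrow> bool" where
  "saturated I \<longleftrightarrow> (\<forall>f. (\<exists>k. \<forall>i<3. var i ^ k * f \<in> I) \<longrightarrow> f \<in> I)"

definition cdim :: "poly3 set \<Rightarrow> nat" where
  "cdim V = vector_space.dim sc V"

definition hilb :: "poly3 set \<Rightarrow> int \<Rightarrow> nat" where
  "hilb I t = (if t < 0 then 0 else cdim {p. hom p t} - cdim {p \<in> I. hom p t})"

text \<open>I is the homogeneous ideal I_Z of a zero-dimensional subscheme Z of P^2:
  a proper saturated homogeneous ideal whose Hilbert function is eventually constant.\<close>
definition zero_dim_ideal :: "poly3 set \<Rightarrow> bool" where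
  "zero_dim_ideal I \<longleftrightarrow> homogeneous_ideal I \<and> saturated I \<and> I \<noteq> UNIV \<and>
     (\<exists>e t0. \<forall>t\<ge>t0. hilb I t = e)"

definition scheme_degree :: "poly3 set \<Rightarrow> nat" where
  "scheme_degree I = (THE e. \<exists>t0. \<forall>t\<ge>t0. hilb I t = e)"

text \<open>N (r rows, c columns, 0-indexed) is a degree Hilbert-Burch matrix of the scheme with
  ideal I: there is a (not necessarily minimal) graded free resolution
  0 -> (+)_i S(-b_i) --A--> (+)_j S(-a_j) --g--> I -> 0 with A = (f i j),
  deg f i j = b i - a j, deg g j = a j, b and a non-increasing, and N i j = b i - a j.\<close>
definition dHB :: "poly3 set \<Rightarrow> (nat \<Rightarrow> nat \<Rightarrow> int) \<Rightarrow> nat \<Rightarrow> nat \<Rightarrow> bool" where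
  "dHB I N r c \<longleftrightarrow> (\<exists>(a::nat \<Rightarrow> int) (b::nat \<Rightarrow> int) (f::nat \<Rightarrow> nat \<Rightarrow> poly3) (g::nat \<Rightarrow> poly3).
     (\<forall>i j. i \<le> j \<longrightarrow> j < r \<longrightarrow> b j \<le> b i) \<and>
     (\<forall>i j. i \<le> j \<longrightarrow> j < c \<longrightarrow> a j \<le> a i) \<and>
     (\<forall>i<r. \<forall>j<c. N i j = b i - a j) \<and>
     (\<forall>j<c. hom (g j) (a j)) \<and>
     (\<forall>i<r. \<forall>j<c. hom (f i j) (b i - a j)) \<and>
     I = {(\<Sum>j<c. h j * g j) | h. True} \<and>
     (\<forall>h. (\<Sum>j<c. h j * g j) = 0 \<longrightarrow> (\<exists>u. \<forall>j<c. h j = (\<Sum>i<r. u i * f i j))) \<and>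
     (\<forall>u. (\<forall>j<c. (\<Sum>i<r. u i * f i j) = 0) \<longrightarrow> (\<forall>i<r. u i = 0)))"

text \<open>Matrices: n x n integer matrices as functions, indices 0..n-1.\<close>
definition homogeneous_matrix :: "(nat \<Rightarrow> nat \<Rightarrow> int) \<Rightarrow> nat \<Rightarrow> bool" where
  "homogeneous_matrix M n \<longleftrightarrow> (\<forall>i i' j j'. i < i' \<longrightarrow> i' < n \<longrightarrow> j < j' \<longrightarrow> j' < n \<longrightarrow>
      M i j + M i' j' = M i j' + M i' j)"

definition well_ordered :: "(nat \<Rightarrow> nat \<Rightarrow> int) \<Rightarrow> nat \<Rightarrow> bool" where
  "well_ordered M n \<longleftrightarrow> (\<forall>i i' j j'. i < i' \<longrightarrow> i' < n \<longrightarrow> j < j' \<longrightarrow> j' < n \<longrightarrow>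
      M i' j \<le> M i j \<and> M i j' \<ge> M i j)"

text \<open>Degree of a square homogeneous matrix: sum over any permutation; we use the identity.\<close>
definition matrix_degree :: "(nat \<Rightarrow> nat \<Rightarrow> int) \<Rightarrow> nat \<Rightarrow> int" where
  "matrix_degree M n = (\<Sum>i<n. M i i)"

end

theory Submission
  imports Defs "HOL-Library.Function_Algebras"
begin

text \<open>A graded free resolution
  \<open>0 \<rightarrow> \<Oplus>\<^sub>i S(-b\<^sub>i) \<rightarrow> \<Oplus>\<^sub>j S(-a\<^sub>j) \<rightarrow> I \<rightarrow> 0\<close> with \<open>n\<close> generators and \<open>n - 1\<close>
  syzygies computes \<open>dim I\<^sub>t\<close> by counting monomials. As soon as all \<open>a\<^sub>j, b\<^sub>i \<le> t + 2\<close>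
  this gives \<open>2 HF(t) = (2t + 3)(\<Sum>a\<^sub>j - \<Sum>b\<^sub>i) + \<Sum>b\<^sub>i\<^sup>2 - \<Sum>a\<^sub>j\<^sup>2\<close>. Since the Hilbert function
  of a zero-dimensional scheme is eventually constant, \<open>\<Sum>a\<^sub>j = \<Sum>b\<^sub>i\<close>, and then \<open>HF(t)\<close>
  equals the degree for every such \<open>t\<close>. Expanding the matrix degree along the diagonal and
  using \<open>\<Sum>a\<^sub>j = \<Sum>b\<^sub>i\<close> gives \<open>d = m\<^sub>0\<^sub>0 + a\<^sub>0\<close>, and well-orderedness gives
  \<open>b\<^sub>0 - a\<^sub>0 = m\<^sub>1\<^sub>0 \<le> m\<^sub>0\<^sub>0\<close>, so \<open>b\<^sub>0 \<le> d\<close> and \<open>t = d - 1\<close> is in range. The degenerate shapes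
  (a unit or zero generator, one generator, \<open>b\<^sub>0 < a\<^sub>0\<close>) all make the ideal principal,
  whose Hilbert function grows linearly.\<close>

section \<open>Dimension counting in infinite-dimensional spaces\<close>

context Vector_Spaces.linear begin

lemma span_inter_span_eq_0:
  assumes C: "vs1.independent (B \<union> D)" "B \<inter> D = {}" "finite (B \<union> D)"
    and x: "x \<in> vs1.span B" "x \<in> vs1.span D"
  shows "x = 0"
proof -
  have fB: "finite B" "finite D" using C by auto
  obtain u where u: "x = (\<Sum>v\<in>B. s1 (u v) v)" using x(1) vs1.span_finite[OF fB(1)] by auto
  obtain w where w: "x = (\<Sum>v\<in>D. s1 (w v) v)" using x(2) vs1.span_finite[OF fB(2)] by auto
  define c where "c v = (if v \<in> B then u v else - w v)" for v
  have "(\<Sum>v\<in>B \<union> D. s1 (c v) v) = (\<Sum>v\<in>B. s1 (c v) v) + (\<Sum>v\<in>D. s1 (c v) v)"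
    using C fB by (simp add: sum.union_disjoint)
  also have "(\<Sum>v\<in>B. s1 (c v) v) = x" using u by (simp add: c_def)
  also have "(\<Sum>v\<in>D. s1 (c v) v) = (\<Sum>v\<in>D. - s1 (w v) v)" using C(2)
    by (intro sum.cong) (auto simp: c_def vs1.scale_minus_left)
  also have "\<dots> = - x" using w by (simp add: sum_negf)
  finally have "(\<Sum>v\<in>B \<union> D. s1 (c v) v) = 0" by simp
  then have "\<forall>v\<in>B. c v = 0"
    using C(1) vs1.dependent_finite[OF C(3)] by blast
  then show ?thesis using u by (simp add: c_def)
qed

lemma dim_image_eq_inj_on:
  assumes "vs1.subspace W" "inj_on f W"
  shows "vs2.dim (f ` W) = vs1.dim W"
proof -
  obtain B where B: "B \<subseteq> W" "vs1.independent B" "W \<subseteq> vs1.span B" "card B = vs1.dim W"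
    using vs1.basis_exists by blast
  have "vs1.span B \<subseteq> W" using B(1) assms(1) vs1.span_minimal by blast
  then have ind: "vs2.independent (f ` B)"
    using B(2) assms(2) inj_on_subset independent_injective_image by blast
  have "vs2.dim (f ` W) = card (f ` B)"
    using B(1) spans_image[OF B(3)] by (intro vs2.dim_unique[OF _ _ ind refl]) auto
  also have "\<dots> = card B" using card_image assms(2) B(1) inj_on_subset by blast
  finally show ?thesis using B by simp
qed

text \<open>Rank--nullity for a finite-dimensional subspace of a possibly infinite-dimensional
  space (the library version assumes the whole space finite-dimensional).\<close>

lemma rank_nullity_finite_span:
  assumes V: "vs1.subspace V" "V \<subseteq> vs1.span F" "finite F"
  shows "vs1.dim V = vs1.dim {x\<in>V. f x = 0} + vs2.dim (f ` V)"
proof -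
  let ?N = "{x\<in>V. f x = 0}"
  obtain B where B: "B \<subseteq> ?N" "vs1.independent B" "?N \<subseteq> vs1.span B" "card B = vs1.dim ?N"
    using vs1.basis_exists by blast
  obtain C where C: "B \<subseteq> C" "C \<subseteq> V" "vs1.independent C" "V \<subseteq> vs1.span C"
    using vs1.maximal_independent_subset_extend[OF _ B(2), of V] B(1) by blast
  have fC: "finite C" using vs1.independent_span_bound[OF V(3) C(3)] C(2) V(2) by auto
  have dV: "vs1.dim V = card C" using vs1.basis_card_eq_dim[OF C(2) C(4) C(3)] by simp
  define D where "D = C - B"
  have CBD: "C = B \<union> D" "B \<inter> D = {}" using C(1) by (auto simp: D_def)
  have spD: "vs1.span D \<subseteq> V" by (rule vs1.span_minimal) (use C(2) V(1) in \<open>auto simp: D_def\<close>)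
  have inj: "inj_on f (vs1.span D)"
    unfolding inj_on_iff_eq_0[OF vs1.subspace_span]
  proof (intro ballI impI)
    fix x assume x: "x \<in> vs1.span D" "f x = 0"
    then have "x \<in> vs1.span B" using spD B(3) by blast
    then show "x = 0" using span_inter_span_eq_0[of B D x] CBD C(3) fC x by simp
  qed
  have ind: "vs2.independent (f ` D)"
    by (rule independent_injective_image[OF _ inj]) (rule vs1.independent_mono[OF C(3)], auto simp: D_def)
  have fspan: "f ` V \<subseteq> vs2.span (f ` D)"
  proof
    fix y assume "y \<in> f ` V"
    then obtain x where x: "x \<in> V" "y = f x" by blast
    then have "x \<in> vs1.span (B \<union> D)" using C(4) CBD(1) by blast
    then obtain u v where uv: "x = u + v" "u \<in> vs1.span B" "v \<in> vs1.span D"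
      using vs1.span_Un by blast
    have "f u = 0" using B(1) by (intro eq_0_on_span[OF _ uv(2)]) auto
    then have "y = f v" using uv x by (simp add: add)
    then show "y \<in> vs2.span (f ` D)" using uv(3) span_image by auto
  qed
  have "vs2.dim (f ` V) = card (f ` D)"
    using C(2) by (intro vs2.dim_unique[OF _ fspan ind refl]) (auto simp: D_def)
  also have "\<dots> = card D" using inj_on_subset[OF inj vs1.span_superset] by (rule card_image)
  finally show ?thesis using dV B(4) CBD fC by (simp add: card_Un_disjoint)
qed

end

section \<open>Homogeneous polynomials\<close>

lemma poly_eq_sum_single:
  "(p::poly3) = (\<Sum>m\<in>Poly_Mapping.keys p. Poly_Mapping.single m (Poly_Mapping.lookup p m))"
  by (rule poly_mapping_eqI) (simp add: lookup_sum lookup_single when_def in_keys_iff sum.delta' split: if_splits)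

lemma lookup_sc [simp]: "Poly_Mapping.lookup (sc c p) m = c * Poly_Mapping.lookup p m"
proof -
  have "sc c p = (\<Sum>k\<in>Poly_Mapping.keys p. Poly_Mapping.single k (c * Poly_Mapping.lookup p k))"
    unfolding sc_def by (subst poly_eq_sum_single) (simp add: sum_distrib_left mult_single)
  then show ?thesis
    by (simp add: lookup_sum lookup_single when_def in_keys_iff sum.delta' split: if_splits)
qed

lemma sc_mult_left: "sc c (p * q) = sc c p * q"
  by (simp add: sc_def mult.assoc)

lemma sc_sum: "sc k (\<Sum>x\<in>X. p x) = (\<Sum>x\<in>X. sc k (p x))"
  by (simp add: sc_def sum_distrib_left)

lemma vector_space_sc: "vector_space sc"
  by unfold_locales (auto intro!: poly_mapping_eqI simp: lookup_add algebra_simps)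

interpretation poly: vector_space sc
  by (rule vector_space_sc)

text \<open>Elements of free modules are modelled as tuples \<^typ>\<open>nat \<Rightarrow> poly3\<close>.\<close>

definition tuple_sc :: "complex \<Rightarrow> (nat \<Rightarrow> poly3) \<Rightarrow> (nat \<Rightarrow> poly3)" where
  "tuple_sc c h = (\<lambda>j. sc c (h j))"

lemma tuple_sc_apply: "tuple_sc c h j = sc c (h j)"
  by (simp add: tuple_sc_def)

lemma vector_space_tuple_sc: "vector_space tuple_sc"
  by unfold_locales (auto intro!: poly_mapping_eqI simp: tuple_sc_def lookup_add algebra_simps)

interpretation tuple: vector_space tuple_sc
  by (rule vector_space_tuple_sc)

lemma mdeg_add [simp]: "mdeg (m + n) = mdeg m + mdeg n"
  by (simp add: mdeg_def)

lemma hom_iff: "hom p d \<longleftrightarrow> (\<forall>m. Poly_Mapping.lookup p m \<noteq> 0 \<longrightarrow> int (mdeg m) = d)"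
  unfolding hom_def Ball_def in_keys_iff by (rule refl)

lemma hom_0 [simp]: "hom 0 d"
  by (simp add: hom_iff)

lemma hom_add: assumes "hom p d" "hom q d" shows "hom (p + q) d"
  unfolding hom_iff
proof (intro allI impI)
  fix m assume "Poly_Mapping.lookup (p + q) m \<noteq> 0"
  then have "Poly_Mapping.lookup p m \<noteq> 0 \<or> Poly_Mapping.lookup q m \<noteq> 0" by (auto simp: lookup_add)
  then show "int (mdeg m) = d" using assms unfolding hom_iff by blast
qed

lemma hom_sc: "hom p d \<Longrightarrow> hom (sc c p) d"
  by (auto simp: hom_iff)

lemma hom_sum: "(\<And>x. x \<in> X \<Longrightarrow> hom (f x) d) \<Longrightarrow> hom (\<Sum>x\<in>X. f x) d"
  by (induction X rule: infinite_finite_induct) (auto intro: hom_add)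

lemma hom_mult: assumes "hom p d" "hom q e" shows "hom (p * q) (d + e)"
  unfolding hom_def
proof
  fix m assume "m \<in> Poly_Mapping.keys (p * q)"
  then obtain u v where "m = u + v" "u \<in> Poly_Mapping.keys p" "v \<in> Poly_Mapping.keys q"
    using keys_mult[of p q] by blast
  then show "int (mdeg m) = d + e" using assms unfolding hom_def by simp
qed

lemma hom_neg_eq_0: "hom p d \<Longrightarrow> d < 0 \<Longrightarrow> p = 0"
  by (rule poly_mapping_eqI) (auto simp: hom_iff)

lemma hom_single_iff: "hom (Poly_Mapping.single m c) d \<longleftrightarrow> c = 0 \<or> int (mdeg m) = d"
  by (auto simp: hom_def)

lemma hom_0_eq_const: "hom q 0 \<Longrightarrow> q = Poly_Mapping.single 0 (Poly_Mapping.lookup q 0)"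
proof (rule poly_mapping_eqI)
  fix m assume q: "hom q 0"
  show "Poly_Mapping.lookup q m = Poly_Mapping.lookup (Poly_Mapping.single 0 (Poly_Mapping.lookup q 0)) m"
  proof (cases "m = 0")
    case False
    then have "mdeg m \<noteq> 0" by (cases m) (auto simp: mdeg_def zero_prod_def)
    then have "Poly_Mapping.lookup q m = 0" using q unfolding hom_iff by (metis of_nat_eq_0_iff)
    then show ?thesis using False by (simp add: lookup_single when_def)
  qed simp
qed

definition hcomp_int :: "poly3 \<Rightarrow> int \<Rightarrow> poly3" where
  "hcomp_int p d = (if d < 0 then 0 else hcomp p (nat d))"

lemma lookup_hcomp_int:
  "Poly_Mapping.lookup (hcomp_int p d) m = (if int (mdeg m) = d then Poly_Mapping.lookup p m else 0)"
  by (auto simp: hcomp_int_def hcomp_def lookup_sum lookup_single when_def in_keys_iff sum.delta'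
      split: if_splits)

lemma hcomp_int_add: "hcomp_int (p + q) d = hcomp_int p d + hcomp_int q d"
  by (rule poly_mapping_eqI) (simp add: lookup_hcomp_int lookup_add)

lemma hcomp_int_sum: "hcomp_int (\<Sum>x\<in>X. f x) d = (\<Sum>x\<in>X. hcomp_int (f x) d)"
  by (induction X rule: infinite_finite_induct)
    (auto simp: hcomp_int_add intro: poly_mapping_eqI simp: lookup_hcomp_int)

lemma hcomp_int_hom: "hom p d \<Longrightarrow> hcomp_int p d = p"
  by (rule poly_mapping_eqI) (auto simp: lookup_hcomp_int hom_iff)

lemma hom_hcomp_int: "hom (hcomp_int p d) d"
  by (auto simp: hom_iff lookup_hcomp_int)

lemma hcomp_int_single:
  "hcomp_int (Poly_Mapping.single m c) d = (if int (mdeg m) = d then Poly_Mapping.single m c else 0)"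
  by (rule poly_mapping_eqI) (auto simp: lookup_hcomp_int lookup_single when_def)

lemma hcomp_int_mult_hom:
  assumes g: "hom g a"
  shows "hcomp_int (p * g) t = hcomp_int p (t - a) * g"
proof -
  let ?P = "Poly_Mapping.keys p" and ?G = "Poly_Mapping.keys g"
  let ?lp = "Poly_Mapping.lookup p" and ?lg = "Poly_Mapping.lookup g"
  have "p * g = (\<Sum>m\<in>?P. \<Sum>n\<in>?G. Poly_Mapping.single m (?lp m) * Poly_Mapping.single n (?lg n))"
    by (subst poly_eq_sum_single[of p], subst poly_eq_sum_single[of g]) (simp add: sum_product)
  then have "hcomp_int (p * g) t =
      (\<Sum>m\<in>?P. \<Sum>n\<in>?G. hcomp_int (Poly_Mapping.single (m + n) (?lp m * ?lg n)) t)"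
    by (simp add: hcomp_int_sum mult_single)
  also have "\<dots> = (\<Sum>m\<in>?P. \<Sum>n\<in>?G.
      hcomp_int (Poly_Mapping.single m (?lp m)) (t - a) * Poly_Mapping.single n (?lg n))"
  proof (intro sum.cong refl)
    fix m n assume "n \<in> ?G"
    then have "int (mdeg n) = a" using g by (simp add: hom_def)
    then show "hcomp_int (Poly_Mapping.single (m + n) (?lp m * ?lg n)) t =
        hcomp_int (Poly_Mapping.single m (?lp m)) (t - a) * Poly_Mapping.single n (?lg n)"
      by (auto simp: hcomp_int_single mult_single)
  qed
  also have "\<dots> = hcomp_int p (t - a) * g"
    by (subst poly_eq_sum_single[of p], subst (2) poly_eq_sum_single[of g])
      (simp add: hcomp_int_sum sum_product)
  finally show ?thesis .
qed

section \<open>Dimensions of graded pieces\<close>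

definition monomials :: "int \<Rightarrow> mono3 set" where
  "monomials d = {m. int (mdeg m) = d}"

lemma monomials_neg: "d < 0 \<Longrightarrow> monomials d = {}"
  by (auto simp: monomials_def)

lemma monomials_nat:
  "monomials (int k) = (\<lambda>(u, v). (u, v, k - u - v)) ` (SIGMA u:{..k}. {..k - u})"
proof (intro equalityI subsetI)
  fix m assume "m \<in> monomials (int k)"
  then obtain u v w where m: "m = (u, v, w)" "u + v + w = k"
    by (cases m) (auto simp: monomials_def mdeg_def)
  then show "m \<in> (\<lambda>(u, v). (u, v, k - u - v)) ` (SIGMA u:{..k}. {..k - u})"
    by (auto intro!: image_eqI[of _ _ "(u, v)"])
qed (auto simp: monomials_def mdeg_def)

lemma finite_monomials [simp]: "finite (monomials d)"
proof (cases "d < 0")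
  case False
  then have "d = int (nat d)" by simp
  moreover have "finite (monomials (int (nat d)))"
    unfolding monomials_nat by (intro finite_imageI finite_SigmaI) auto
  ultimately show ?thesis by metis
qed (simp add: monomials_neg)

lemma card_monomials_nat: "2 * card (monomials (int k)) = (k + 1) * (k + 2)"
proof -
  have "inj_on (\<lambda>(u, v). (u, v, k - u - v)) (SIGMA u:{..k}. {..k - u})"
    by (auto simp: inj_on_def)
  then have "card (monomials (int k)) = (\<Sum>u\<le>k. Suc (k - u))"
    unfolding monomials_nat by (simp add: card_image card_SigmaI)
  also have "\<dots> = (\<Sum>u\<le>k. Suc u)"
    by (rule sum.reindex_bij_witness[of _ "\<lambda>u. k - u" "\<lambda>u. k - u"]) auto
  moreover have "2 * (\<Sum>u\<le>k. Suc u) = (k + 1) * (k + 2)"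
    by (induction k) auto
  ultimately show ?thesis by simp
qed

lemma card_monomials:
  assumes "d \<ge> -2"
  shows "2 * int (card (monomials d)) = (d + 1) * (d + 2)"
proof (cases "d \<ge> 0")
  case True
  then obtain k where "d = int k" by (rule nonneg_int_cases)
  then show ?thesis using card_monomials_nat[of k] by (simp add: algebra_simps flip: of_nat_mult)
next
  case False
  with assms have "d = -1 \<or> d = -2" by linarith
  then show ?thesis by (auto simp: monomials_neg)
qed

lemma card_monomials_shift:
  assumes "x \<le> t + 2"
  shows "2 * int (card (monomials (t - x))) = (t + 1) * (t + 2) - (2 * t + 3) * x + x\<^sup>2"
  using card_monomials[of "t - x"] assms by (simp add: algebra_simps power2_eq_square)

lemma hom_mult_in_span:
  assumes "hom q d"
  shows "q * g \<in> poly.span ((\<lambda>m. Poly_Mapping.single m 1 * g) ` monomials d)"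
proof -
  have "q = (\<Sum>m\<in>Poly_Mapping.keys q. sc (Poly_Mapping.lookup q m) (Poly_Mapping.single m 1))"
    by (subst poly_eq_sum_single) (simp add: sc_def mult_single)
  then have "q * g = (\<Sum>m\<in>Poly_Mapping.keys q. sc (Poly_Mapping.lookup q m) (Poly_Mapping.single m 1 * g))"
    by (metis (no_types, lifting) sc_mult_left sum.cong sum_distrib_right)
  also have "\<dots> \<in> poly.span ((\<lambda>m. Poly_Mapping.single m 1 * g) ` monomials d)"
    using assms by (intro poly.span_sum poly.span_scale poly.span_base)
      (auto simp: monomials_def hom_def)
  finally show ?thesis .
qed

lemma dim_multiples_le:
  assumes "V \<subseteq> {q * g | q. hom q d}"
  shows "poly.dim V \<le> card (monomials d)"
proof -
  have "V \<subseteq> poly.span ((\<lambda>m. Poly_Mapping.single m 1 * g) ` monomials d)"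
    using assms hom_mult_in_span by blast
  then have "poly.dim V \<le> card ((\<lambda>m. Poly_Mapping.single m 1 * g) ` monomials d)"
    by (rule poly.dim_le_card) simp
  also have "\<dots> \<le> card (monomials d)"
    by (rule card_image_le) simp
  finally show ?thesis .
qed

text \<open>With \<open>\<delta> j = t - a j\<close> this is the degree-\<open>t\<close> part of \<open>\<Oplus>\<^sub>j<\<^sub>c S(-a j)\<close>.\<close>

definition graded_tuples :: "nat \<Rightarrow> (nat \<Rightarrow> int) \<Rightarrow> (nat \<Rightarrow> poly3) set" where
  "graded_tuples c \<delta> = {h. (\<forall>j<c. hom (h j) (\<delta> j)) \<and> (\<forall>j\<ge>c. h j = 0)}"

definition unit_tuple :: "nat \<times> mono3 \<Rightarrow> (nat \<Rightarrow> poly3)" where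
  "unit_tuple x = (\<lambda>j. if j = fst x then Poly_Mapping.single (snd x) 1 else 0)"

abbreviation tuple_basis :: "nat \<Rightarrow> (nat \<Rightarrow> int) \<Rightarrow> (nat \<Rightarrow> poly3) set" where
  "tuple_basis c \<delta> \<equiv> unit_tuple ` (SIGMA j:{..<c}. monomials (\<delta> j))"

lemma lookup_sum_unit_tuple:
  assumes "finite X"
  shows "Poly_Mapping.lookup ((\<Sum>x\<in>X. tuple_sc (w x) (unit_tuple x)) j) m = (if (j, m) \<in> X then w (j, m) else 0)"
  using assms
  by (induction X rule: finite_induct)
    (auto simp: lookup_add tuple_sc_apply unit_tuple_def lookup_single when_def)

lemma subspace_graded_tuples: "tuple.subspace (graded_tuples c \<delta>)"
  by (auto simp: tuple.subspace_def graded_tuples_def tuple_sc_apply intro: hom_add hom_sc)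

lemma graded_tuples_subset_span: "graded_tuples c \<delta> \<subseteq> tuple.span (tuple_basis c \<delta>)"
proof
  let ?X = "SIGMA j:{..<c}. monomials (\<delta> j)"
  fix h assume h: "h \<in> graded_tuples c \<delta>"
  have "h = (\<Sum>x\<in>?X. tuple_sc (Poly_Mapping.lookup (h (fst x)) (snd x)) (unit_tuple x))" (is "h = ?s")
  proof (intro ext poly_mapping_eqI)
    fix j m
    have "Poly_Mapping.lookup (h j) m = 0" if "(j, m) \<notin> ?X"
      using h that unfolding graded_tuples_def hom_iff monomials_def
      by (cases "j < c") (auto simp del: split_paired_All)
    then show "Poly_Mapping.lookup (h j) m = Poly_Mapping.lookup (?s j) m"
      by (auto simp: lookup_sum_unit_tuple)
  qed
  also have "\<dots> \<in> tuple.span (tuple_basis c \<delta>)"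
    by (intro tuple.span_sum tuple.span_scale tuple.span_base) auto
  finally show "h \<in> tuple.span (tuple_basis c \<delta>)" .
qed

lemma inj_unit_tuple: "inj unit_tuple"
proof (rule injI)
  fix x y assume "unit_tuple x = unit_tuple y"
  then have "Poly_Mapping.lookup (unit_tuple x (fst x)) (snd x) = Poly_Mapping.lookup (unit_tuple y (fst x)) (snd x)"
    by simp
  then show "x = y"
    by (auto simp: unit_tuple_def lookup_single when_def split: if_splits intro: prod_eqI)
qed

lemma independent_tuple_basis: "tuple.independent (tuple_basis c \<delta>)"
proof (rule tuple.independent_if_scalars_zero)
  let ?X = "SIGMA j:{..<c}. monomials (\<delta> j)"
  fix f v assume s: "(\<Sum>x\<in>tuple_basis c \<delta>. tuple_sc (f x) x) = 0" and v: "v \<in> tuple_basis c \<delta>"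
  then obtain x where x: "x \<in> ?X" "v = unit_tuple x" by blast
  have "(\<Sum>y\<in>?X. tuple_sc (f (unit_tuple y)) (unit_tuple y)) = 0"
    using s by (simp add: sum.reindex inj_on_subset[OF inj_unit_tuple])
  then have "Poly_Mapping.lookup ((\<Sum>y\<in>?X. tuple_sc (f (unit_tuple y)) (unit_tuple y)) (fst x)) (snd x) = 0"
    by simp
  then show "f v = 0" using x by (simp add: lookup_sum_unit_tuple)
qed simp

lemma dim_graded_tuples: "tuple.dim (graded_tuples c \<delta>) = (\<Sum>j<c. card (monomials (\<delta> j)))"
proof -
  have "tuple_basis c \<delta> \<subseteq> graded_tuples c \<delta>"
    by (auto simp: unit_tuple_def graded_tuples_def monomials_def hom_single_iff)
  then have "tuple.dim (graded_tuples c \<delta>) = card (tuple_basis c \<delta>)"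
    by (rule tuple.dim_unique[OF _ graded_tuples_subset_span independent_tuple_basis refl])
  also have "\<dots> = (\<Sum>j<c. card (monomials (\<delta> j)))"
    by (simp add: card_image inj_on_subset[OF inj_unit_tuple] card_SigmaI)
  finally show ?thesis .
qed

definition tuple_of :: "poly3 \<Rightarrow> (nat \<Rightarrow> poly3)" where
  "tuple_of p = (\<lambda>j. if j = 0 then p else 0)"

lemma linear_tuple_of: "Vector_Spaces.linear sc tuple_sc tuple_of"
  unfolding Vector_Spaces.linear_iff
proof (intro conjI allI)
  fix x y show "tuple_of (x + y) = tuple_of x + tuple_of y"
    by (rule ext) (simp add: tuple_of_def)
  fix k show "tuple_of (sc k x) = tuple_sc k (tuple_of x)"
    by (rule ext) (simp add: tuple_of_def tuple_sc_apply sc_def)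
qed (fact vector_space_sc vector_space_tuple_sc)+

lemma inj_tuple_of: "inj tuple_of"
  by (rule injI) (metis tuple_of_def)

lemma dim_hom_polys: "poly.dim {p. hom p t} = card (monomials t)"
proof -
  have "tuple_of ` {p. hom p t} = graded_tuples 1 (\<lambda>_. t)"
    by (auto simp: tuple_of_def graded_tuples_def image_iff fun_eq_iff)
  moreover have "tuple.dim (tuple_of ` {p. hom p t}) = poly.dim {p. hom p t}"
    by (rule linear.dim_image_eq_inj_on[OF linear_tuple_of])
      (auto simp: poly.subspace_def intro: hom_add hom_sc inj_on_subset[OF inj_tuple_of])
  ultimately show ?thesis by (simp add: dim_graded_tuples)
qed

lemma hilb_eq_card_minus_dim:
  assumes "t \<ge> 0"
  shows "int (hilb I t) = int (card (monomials t)) - int (poly.dim {p\<in>I. hom p t})"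
proof -
  have "poly.dim {p\<in>I. hom p t} \<le> card (monomials t)"
    by (rule dim_multiples_le[where g = 1]) force
  then show ?thesis using assms by (simp add: hilb_def cdim_def dim_hom_polys of_nat_diff)
qed

lemma scheme_degree_eqI: "\<forall>t\<ge>t0. hilb I t = e \<Longrightarrow> scheme_degree I = e"
  unfolding scheme_degree_def
  by (rule the_equality) (blast, metis max.cobounded1 max.cobounded2)

section \<open>Principal ideals are not zero-dimensional\<close>

lemma hilb_principal_ge:
  assumes Ig: "I \<subseteq> {h * g | h. True}" and g: "hom g a" and a: "a \<ge> 1" and t: "t \<ge> 0"
  shows "int (hilb I t) \<ge> t + 1"
proof -
  have "{p\<in>I. hom p t} \<subseteq> {q * g | q. hom q (t - a)}"
  proof
    fix p assume p: "p \<in> {p\<in>I. hom p t}"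
    then obtain h where "p = h * g" using Ig by blast
    then have "p = hcomp_int h (t - a) * g"
      using p hcomp_int_mult_hom[OF g, of h t] by (simp add: hcomp_int_hom)
    then show "p \<in> {q * g | q. hom q (t - a)}" using hom_hcomp_int by blast
  qed
  then have dim: "poly.dim {p\<in>I. hom p t} \<le> card (monomials (t - a))"
    by (rule dim_multiples_le)
  have "2 * int (card (monomials (t - a))) \<le> t * (t + 1)"
  proof (cases "t - a < 0")
    case False
    then have "2 * int (card (monomials (t - a))) = (t - a + 1) * (t - a + 2)"
      by (simp add: card_monomials)
    also have "\<dots> \<le> t * (t + 1)" using False a by (intro mult_mono) auto
    finally show ?thesis .
  qed (use t in \<open>simp add: monomials_neg\<close>)
  with of_nat_mono[OF dim] hilb_eq_card_minus_dim[OF t, of I] card_monomials[of t] t show ?thesis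
    by (simp add: algebra_simps)
qed

lemma zero_dim_ideal_not_principal:
  assumes "zero_dim_ideal I" "I \<subseteq> {h * g | h. True}" "hom g a" "a \<ge> 1"
  shows False
proof -
  from assms(1) obtain e t0 where e: "\<forall>t\<ge>t0. hilb I t = e"
    by (auto simp: zero_dim_ideal_def)
  define t where "t = max t0 (int e)"
  have "int (hilb I t) \<ge> t + 1"
    using hilb_principal_ge[OF assms(2-4), of t] by (simp add: t_def)
  moreover have "hilb I t = e" using e by (simp add: t_def)
  ultimately show False by (simp add: t_def)
qed

lemma zero_dim_ideal_not_subset_zero: "zero_dim_ideal I \<Longrightarrow> \<not> I \<subseteq> {0}"
  using zero_dim_ideal_not_principal[of I 0 1] by auto

section \<open>Hilbert function of a resolved ideal\<close>

lemma sum_if_eq_mult_left: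
  assumes "finite A" "j \<in> A"
  shows "(\<Sum>k\<in>A. (if k = j then x else 0) * y k) = (x::'a::semiring_0) * y j"
proof -
  have "(\<Sum>k\<in>A. (if k = j then x else 0) * y k) = (\<Sum>k\<in>A. if k = j then x * y k else 0)"
    by (rule sum.cong) auto
  then show ?thesis using assms by simp
qed

lemma sum_if_eq_mult_right:
  assumes "finite A" "j \<in> A"
  shows "(\<Sum>k\<in>A. y k * (if j = k then x else 0)) = y j * (x::'a::semiring_0)"
proof -
  have "(\<Sum>k\<in>A. y k * (if j = k then x else 0)) = (\<Sum>k\<in>A. if j = k then y k * x else 0)"
    by (rule sum.cong) auto
  then show ?thesis using assms by simp
qed

locale hilbert_burch_resolution =
  fixes I :: "poly3 set" and r c :: nat and a b :: "nat \<Rightarrow> int"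
    and f :: "nat \<Rightarrow> nat \<Rightarrow> poly3" and g :: "nat \<Rightarrow> poly3"
  assumes c_eq: "c = r + 1"
    and g_hom: "\<forall>j<c. hom (g j) (a j)"
    and f_hom: "\<forall>i<r. \<forall>j<c. hom (f i j) (b i - a j)"
    and I_eq: "I = {(\<Sum>j<c. h j * g j) | h. True}"
    and exact: "\<forall>h. (\<Sum>j<c. h j * g j) = 0 \<longrightarrow> (\<exists>u. \<forall>j<c. h j = (\<Sum>i<r. u i * f i j))"
    and f_inj: "\<forall>u. (\<forall>j<c. (\<Sum>i<r. u i * f i j) = 0) \<longrightarrow> (\<forall>i<r. u i = 0)"
begin

lemma scalar_matrix_factors_left:
  assumes i0: "i0 < r"
  defines "w \<equiv> \<Sum>k<c. f i0 k * g k"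
  shows "\<exists>U. \<forall>j<c. \<forall>k<c. (\<Sum>i<r. U j i * f i k) = (if k = j then w else 0)"
proof -
  have "\<forall>j. \<exists>u. j < c \<longrightarrow> (\<forall>k<c. g j * f i0 k - (if k = j then w else 0) = (\<Sum>i<r. u i * f i k))"
  proof (intro allI)
    fix j
    show "\<exists>u. j < c \<longrightarrow> (\<forall>k<c. g j * f i0 k - (if k = j then w else 0) = (\<Sum>i<r. u i * f i k))"
    proof (cases "j < c")
      case j: True
      \<comment> \<open>\<open>g\<^sub>j f\<^sub>i\<^sub>0 - w e\<^sub>j\<close> is a syzygy of \<open>g\<close>\<close>
      have "(\<Sum>k<c. (g j * f i0 k - (if k = j then w else 0)) * g k)
          = (\<Sum>k<c. g j * (f i0 k * g k)) - (\<Sum>k<c. (if k = j then w else 0) * g k)"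
        by (simp add: left_diff_distrib sum_subtractf mult.assoc)
      also have "\<dots> = g j * w - w * g j"
        using j by (simp add: w_def sum_distrib_left sum_if_eq_mult_left)
      also have "\<dots> = 0" by (simp add: mult.commute)
      finally have "(\<Sum>k<c. (g j * f i0 k - (if k = j then w else 0)) * g k) = 0" .
      from exact[rule_format, OF this] show ?thesis by blast
    qed simp
  qed
  then obtain U where "\<forall>j. j < c \<longrightarrow>
      (\<forall>k<c. g j * f i0 k - (if k = j then w else 0) = (\<Sum>i<r. U j i * f i k))"
    by (rule choice[THEN exE])
  then have U: "g j * f i0 k - (if k = j then w else 0) = (\<Sum>i<r. U j i * f i k)"
    if "j < c" "k < c" for j k
    using that by blast
  define U' where "U' j i = (if i = i0 then g j else 0) - U j i" for j i
  have "(\<Sum>i<r. U' j i * f i k) = (if k = j then w else 0)" if "j < c" "k < c" for j k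
  proof -
    have "(\<Sum>i<r. U' j i * f i k)
        = (\<Sum>i<r. (if i = i0 then g j else 0) * f i k) - (\<Sum>i<r. U j i * f i k)"
      by (simp add: U'_def left_diff_distrib sum_subtractf)
    also have "(\<Sum>i<r. (if i = i0 then g j else 0) * f i k) = g j * f i0 k"
      using i0 by (simp add: sum_if_eq_mult_left)
    finally show ?thesis
      using U[OF that] by (cases "k = j") (auto simp: diff_eq_eq eq_diff_eq add.commute)
  qed
  then show ?thesis by blast
qed

lemma scalar_matrix_factors_right:
  assumes U: "\<And>j k. j < c \<Longrightarrow> k < c \<Longrightarrow> (\<Sum>i<r. U j i * f i k) = (if k = j then w else 0)"
    and l: "l < r"
  shows "(\<Sum>k<c. f l k * U k l) = w"
proof -
  define x where "x m = (\<Sum>k<c. f l k * U k m) - (if m = l then w else 0)" for m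
  have "(\<Sum>m<r. x m * f m q) = 0" if q: "q < c" for q
  proof -
    have "(\<Sum>m<r. x m * f m q)
        = (\<Sum>m<r. \<Sum>k<c. f l k * (U k m * f m q)) - (\<Sum>m<r. (if m = l then w else 0) * f m q)"
      by (simp add: x_def left_diff_distrib sum_subtractf sum_distrib_right mult.assoc)
    also have "(\<Sum>m<r. \<Sum>k<c. f l k * (U k m * f m q)) = (\<Sum>k<c. f l k * (\<Sum>m<r. U k m * f m q))"
      by (subst sum.swap) (simp add: sum_distrib_left)
    also have "\<dots> = (\<Sum>k<c. f l k * (if q = k then w else 0))"
      using q by (intro sum.cong refl) (simp add: U)
    also have "\<dots> = f l q * w" using q by (simp add: sum_if_eq_mult_right)
    also have "(\<Sum>m<r. (if m = l then w else 0) * f m q) = w * f l q"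
      using l by (simp add: sum_if_eq_mult_left)
    finally show ?thesis by (simp add: mult.commute)
  qed
  then have "x l = 0" using f_inj l by blast
  then show ?thesis by (simp add: x_def)
qed

text \<open>The definition of a resolution only asks that every syzygy of \<open>g\<close> comes from \<open>f\<close>;
  that the rows of \<open>f\<close> are syzygies follows from injectivity of \<open>f\<close> and \<open>c = r + 1\<close>:
  the \<open>c \<times> c\<close> matrix \<open>w \<cdot> Id\<close> factors as \<open>U f\<close>, then \<open>f U = w \<cdot> Id\<close> as an \<open>r \<times> r\<close>
  matrix, and comparing traces yields \<open>c w = r w\<close>.\<close>

lemma syzygy_row:
  assumes i0: "i0 < r"
  shows "(\<Sum>k<c. f i0 k * g k) = 0"
proof -
  define w where "w = (\<Sum>k<c. f i0 k * g k)"
  obtain U where U: "\<And>j k. j < c \<Longrightarrow> k < c \<Longrightarrow> (\<Sum>i<r. U j i * f i k) = (if k = j then w else 0)"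
    using scalar_matrix_factors_left[OF i0] unfolding w_def by blast
  have "of_nat r * w = (\<Sum>l<r. \<Sum>k<c. f l k * U k l)"
    using scalar_matrix_factors_right[OF U] by simp
  also have "\<dots> = (\<Sum>k<c. \<Sum>l<r. U k l * f l k)"
    by (subst sum.swap) (simp add: mult.commute)
  also have "\<dots> = of_nat c * w" using U by simp
  finally have "of_nat r * w + w = of_nat r * w + 0" by (simp add: c_eq distrib_right)
  then show ?thesis by (simp add: w_def)
qed

definition gen_map :: "(nat \<Rightarrow> poly3) \<Rightarrow> poly3" where
  "gen_map h = (\<Sum>j<c. h j * g j)"

definition syz_map :: "(nat \<Rightarrow> poly3) \<Rightarrow> (nat \<Rightarrow> poly3)" where
  "syz_map u = (\<lambda>j. if j < c then (\<Sum>i<r. u i * f i j) else 0)"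

lemma linear_gen_map: "Vector_Spaces.linear tuple_sc sc gen_map"
  unfolding Vector_Spaces.linear_iff
  by (simp add: vector_space_sc vector_space_tuple_sc gen_map_def tuple_sc_apply distrib_right sum.distrib
      sc_sum sc_mult_left)

lemma linear_syz_map: "Vector_Spaces.linear tuple_sc tuple_sc syz_map"
  unfolding Vector_Spaces.linear_iff
  by (simp add: vector_space_tuple_sc syz_map_def tuple_sc_apply distrib_right sum.distrib sc_sum sc_mult_left
      fun_eq_iff)

abbreviation gen_tuples :: "int \<Rightarrow> (nat \<Rightarrow> poly3) set" where
  "gen_tuples t \<equiv> graded_tuples c (\<lambda>j. t - a j)"

abbreviation syz_tuples :: "int \<Rightarrow> (nat \<Rightarrow> poly3) set" where
  "syz_tuples t \<equiv> graded_tuples r (\<lambda>i. t - b i)"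

lemma gen_map_image: "gen_map ` gen_tuples t = {p\<in>I. hom p t}"
proof (intro equalityI subsetI)
  fix p assume "p \<in> gen_map ` gen_tuples t"
  then obtain h where h: "h \<in> gen_tuples t" "p = gen_map h" by blast
  have "hom (h j * g j) t" if "j < c" for j
    using hom_mult[of "h j" "t - a j" "g j" "a j"] h(1) g_hom that by (simp add: graded_tuples_def)
  then show "p \<in> {p\<in>I. hom p t}"
    using h(2) by (auto simp: I_eq gen_map_def intro: hom_sum)
next
  fix p assume p: "p \<in> {p\<in>I. hom p t}"
  then obtain h where h: "p = (\<Sum>j<c. h j * g j)" by (auto simp: I_eq)
  define h' where "h' j = (if j < c then hcomp_int (h j) (t - a j) else 0)" for j
  have "gen_map h' = (\<Sum>j<c. hcomp_int (h j * g j) t)"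
    unfolding gen_map_def h'_def
    using g_hom hcomp_int_mult_hom[of "g j" "a j" "h j" t for j] by (intro sum.cong) simp_all
  also have "\<dots> = p" using p by (simp add: h hcomp_int_sum[symmetric] hcomp_int_hom)
  finally show "p \<in> gen_map ` gen_tuples t"
    by (intro image_eqI[of _ _ h']) (auto simp: graded_tuples_def h'_def hom_hcomp_int)
qed

lemma syz_map_in: "u \<in> syz_tuples t \<Longrightarrow> syz_map u \<in> gen_tuples t"
proof -
  assume u: "u \<in> syz_tuples t"
  have "hom (u i * f i j) (t - a j)" if "i < r" "j < c" for i j
    using hom_mult[of "u i" "t - b i" "f i j" "b i - a j"] u f_hom that by (simp add: graded_tuples_def)
  then show ?thesis by (auto simp: graded_tuples_def syz_map_def intro: hom_sum)
qed

lemma gen_map_kernel: "{h\<in>gen_tuples t. gen_map h = 0} = syz_map ` syz_tuples t"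
proof (intro equalityI subsetI)
  fix h assume h: "h \<in> {h\<in>gen_tuples t. gen_map h = 0}"
  then obtain u where u: "\<forall>j<c. h j = (\<Sum>i<r. u i * f i j)"
    using exact by (auto simp: gen_map_def)
  define u' where "u' i = (if i < r then hcomp_int (u i) (t - b i) else 0)" for i
  have "syz_map u' j = h j" for j
  proof (cases "j < c")
    case True
    have "syz_map u' j = (\<Sum>i<r. hcomp_int (u i * f i j) (t - a j))"
      using True f_hom hcomp_int_mult_hom[of "f i j" "b i - a j" "u i" "t - a j" for i]
      by (simp add: syz_map_def u'_def)
    also have "\<dots> = h j"
      using u h True by (simp add: hcomp_int_sum[symmetric] graded_tuples_def hcomp_int_hom)
    finally show ?thesis .
  qed (use h in \<open>simp add: syz_map_def graded_tuples_def\<close>)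
  moreover have "u' \<in> syz_tuples t" by (auto simp: graded_tuples_def u'_def hom_hcomp_int)
  ultimately show "h \<in> syz_map ` syz_tuples t" by (metis ext image_eqI)
next
  fix h assume "h \<in> syz_map ` syz_tuples t"
  then obtain u where u: "u \<in> syz_tuples t" "h = syz_map u" by blast
  have "gen_map (syz_map u) = (\<Sum>i<r. u i * (\<Sum>j<c. f i j * g j))"
    by (simp add: gen_map_def syz_map_def sum_distrib_right sum_distrib_left mult.assoc)
      (rule sum.swap)
  also have "\<dots> = 0" by (simp add: syzygy_row)
  finally show "h \<in> {h\<in>gen_tuples t. gen_map h = 0}" using syz_map_in[OF u(1)] u(2) by simp
qed

lemma inj_on_syz_map: "inj_on syz_map (syz_tuples t)"
proof (rule inj_onI)
  fix x y assume x: "x \<in> syz_tuples t" and y: "y \<in> syz_tuples t" and e: "syz_map x = syz_map y"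
  have "(\<Sum>i<r. (x i - y i) * f i j) = 0" if "j < c" for j
    using fun_cong[OF e, of j] that by (simp add: syz_map_def left_diff_distrib sum_subtractf)
  then have "\<forall>i<r. x i - y i = 0" using f_inj[rule_format, of "\<lambda>i. x i - y i"] by blast
  then show "x = y" using x y by (auto simp: graded_tuples_def intro!: ext) (metis not_less)
qed

lemma dim_ideal_degree:
  "poly.dim {p\<in>I. hom p t} + (\<Sum>i<r. card (monomials (t - b i))) = (\<Sum>j<c. card (monomials (t - a j)))"
proof -
  have "tuple.dim (gen_tuples t) =
      tuple.dim {h\<in>gen_tuples t. gen_map h = 0} + poly.dim (gen_map ` gen_tuples t)"
    by (rule linear.rank_nullity_finite_span[OF linear_gen_map subspace_graded_tuples
          graded_tuples_subset_span]) simp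
  moreover have "tuple.dim (syz_map ` syz_tuples t) = tuple.dim (syz_tuples t)"
    by (rule linear.dim_image_eq_inj_on[OF linear_syz_map subspace_graded_tuples inj_on_syz_map])
  ultimately show ?thesis by (simp add: gen_map_kernel gen_map_image dim_graded_tuples)
qed

lemma hilb_formula:
  assumes t: "t \<ge> 0" "\<forall>j<c. a j \<le> t + 2" "\<forall>i<r. b i \<le> t + 2"
  shows "2 * int (hilb I t) = (2 * t + 3) * ((\<Sum>j<c. a j) - (\<Sum>i<r. b i))
    + (\<Sum>i<r. (b i)\<^sup>2) - (\<Sum>j<c. (a j)\<^sup>2)"
proof -
  have sum_monomials: "2 * (\<Sum>j<k. int (card (monomials (t - x j))))
      = int k * ((t + 1) * (t + 2)) - (2 * t + 3) * (\<Sum>j<k. x j) + (\<Sum>j<k. (x j)\<^sup>2)"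
    if "\<forall>j<k. x j \<le> t + 2" for x k
    using that by (simp add: sum_distrib_left card_monomials_shift sum.distrib sum_subtractf)
  have "int (poly.dim {p\<in>I. hom p t}) + (\<Sum>i<r. int (card (monomials (t - b i))))
      = (\<Sum>j<c. int (card (monomials (t - a j))))"
    using arg_cong[OF dim_ideal_degree[of t], of int] by simp
  with hilb_eq_card_minus_dim[OF t(1), of I] card_monomials[of t] t sum_monomials[OF t(2)]
    sum_monomials[OF t(3)] show ?thesis
    by (simp add: c_eq algebra_simps)
qed

lemma hilb_formula_eventually:
  "\<exists>t0\<ge>0. \<forall>t\<ge>t0. 2 * int (hilb I t) = (2 * t + 3) * ((\<Sum>j<c. a j) - (\<Sum>i<r. b i))
    + (\<Sum>i<r. (b i)\<^sup>2) - (\<Sum>j<c. (a j)\<^sup>2)"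
proof (intro exI conjI allI impI)
  let ?t0 = "(\<Sum>j<c. \<bar>a j\<bar>) + (\<Sum>i<r. \<bar>b i\<bar>)"
  show "?t0 \<ge> 0" by (simp add: sum_nonneg)
  fix t assume t: "t \<ge> ?t0"
  have "a j \<le> t + 2" if "j < c" for j
  proof -
    have "\<bar>a j\<bar> \<le> (\<Sum>j<c. \<bar>a j\<bar>)" using that by (intro member_le_sum) auto
    then show ?thesis using t abs_ge_self[of "a j"] sum_abs_ge_zero[of b "{..<r}"] by linarith
  qed
  moreover have "b i \<le> t + 2" if "i < r" for i
  proof -
    have "\<bar>b i\<bar> \<le> (\<Sum>i<r. \<bar>b i\<bar>)" using that by (intro member_le_sum) auto
    then show ?thesis using t abs_ge_self[of "b i"] sum_abs_ge_zero[of a "{..<c}"] by linarith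
  qed
  ultimately show "2 * int (hilb I t) = (2 * t + 3) * ((\<Sum>j<c. a j) - (\<Sum>i<r. b i))
      + (\<Sum>i<r. (b i)\<^sup>2) - (\<Sum>j<c. (a j)\<^sup>2)"
    using t by (intro hilb_formula) (auto simp: sum_nonneg order_trans[OF _ t])
qed

context
  assumes zero_dim: "zero_dim_ideal I"
begin

lemma degree_sums_eq: "(\<Sum>j<c. a j) = (\<Sum>i<r. b i)"
proof -
  obtain e t1 where e: "\<forall>t\<ge>t1. hilb I t = e"
    using zero_dim by (auto simp: zero_dim_ideal_def)
  obtain t0 where "t0 \<ge> 0" and formula: "\<forall>t\<ge>t0. 2 * int (hilb I t) = (2 * t + 3) * ((\<Sum>j<c. a j)
      - (\<Sum>i<r. b i)) + (\<Sum>i<r. (b i)\<^sup>2) - (\<Sum>j<c. (a j)\<^sup>2)"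
    using hilb_formula_eventually by blast
  define t where "t = max t0 t1"
  have "2 * int e = (2 * t + 3) * ((\<Sum>j<c. a j) - (\<Sum>i<r. b i)) + (\<Sum>i<r. (b i)\<^sup>2) - (\<Sum>j<c. (a j)\<^sup>2)"
    "2 * int e = (2 * (t + 1) + 3) * ((\<Sum>j<c. a j) - (\<Sum>i<r. b i)) + (\<Sum>i<r. (b i)\<^sup>2) - (\<Sum>j<c. (a j)\<^sup>2)"
    using formula[rule_format, of t] formula[rule_format, of "t + 1"] e by (simp_all add: t_def)
  then show ?thesis by (simp add: algebra_simps)
qed

lemma hilb_eq_scheme_degree:
  assumes "t \<ge> 0" "\<forall>j<c. a j \<le> t + 2" "\<forall>i<r. b i \<le> t + 2"
  shows "hilb I t = scheme_degree I"
proof -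
  obtain e t1 where e: "\<forall>t\<ge>t1. hilb I t = e"
    using zero_dim by (auto simp: zero_dim_ideal_def)
  obtain t0 where "t0 \<ge> 0" and formula: "\<forall>t\<ge>t0. 2 * int (hilb I t) = (2 * t + 3) * ((\<Sum>j<c. a j)
      - (\<Sum>i<r. b i)) + (\<Sum>i<r. (b i)\<^sup>2) - (\<Sum>j<c. (a j)\<^sup>2)"
    using hilb_formula_eventually by blast
  have "2 * int (hilb I t) = 2 * int (hilb I (max t0 t1))"
    using hilb_formula[OF assms] formula degree_sums_eq by simp
  then show ?thesis using e scheme_degree_eqI[OF e] by simp
qed

lemma generator_degree_pos:
  assumes j: "j < c" "g j \<noteq> 0"
  shows "a j \<ge> 1"
proof (rule ccontr)
  assume "\<not> a j \<ge> 1"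
  with hom_neg_eq_0 g_hom j have "a j = 0" by force
  with g_hom j have gj: "g j = Poly_Mapping.single 0 (Poly_Mapping.lookup (g j) 0)"
    by (metis hom_0_eq_const)
  define k where "k = Poly_Mapping.lookup (g j) 0"
  have k: "k \<noteq> 0" using gj j(2) by (metis k_def single_zero)
  have "p \<in> I" for p
  proof -
    have "(\<Sum>l<c. (if l = j then sc (1 / k) p else 0) * g l) = sc (1 / k) p * g j"
      using j by (simp add: sum_if_eq_mult_left)
    also have "\<dots> = p"
      using k by (subst gj) (simp add: sc_def k_def mult_single mult.commute mult.left_commute)
    finally show ?thesis
      by (auto simp: I_eq intro!: exI[of _ "\<lambda>l. if l = j then sc (1 / k) p else 0"])
  qed
  then show False using zero_dim by (auto simp: zero_dim_ideal_def)
qed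

lemma later_generator_nonzero: "\<exists>j. 1 \<le> j \<and> j < c \<and> g j \<noteq> 0"
proof (rule ccontr)
  assume "\<nexists>j. 1 \<le> j \<and> j < c \<and> g j \<noteq> 0"
  then have later_zero: "g j = 0" if "1 \<le> j" "j < c" for j
    using that by blast
  have "I \<subseteq> {h * g 0 | h. True}"
  proof
    fix p assume "p \<in> I"
    then obtain h where "p = (\<Sum>j<c. h j * g j)" using I_eq by blast
    also have "\<dots> = (\<Sum>j<c. if j = 0 then h 0 * g 0 else 0)"
      using later_zero by (intro sum.cong) auto
    also have "\<dots> = h 0 * g 0" by (simp add: c_eq)
    finally show "p \<in> {h * g 0 | h. True}" by blast
  qed
  moreover have "hom (g 0) (if g 0 = 0 then 1 else a 0)" "(if g 0 = 0 then 1 else a 0) \<ge> 1"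
    using g_hom generator_degree_pos[of 0] by (auto simp: c_eq)
  ultimately show False using zero_dim_ideal_not_principal zero_dim by blast
qed

lemma resolution_shape:
  assumes a_mono: "\<forall>j<c. a j \<le> a 0" and b_mono: "\<forall>i<r. b i \<le> b 0"
  shows "2 \<le> c" "1 \<le> a 0" "a 0 \<le> b 0"
proof -
  obtain j where j: "1 \<le> j" "j < c" "g j \<noteq> 0"
    using later_generator_nonzero by blast
  then show "2 \<le> c" by simp
  show "1 \<le> a 0"
    using generator_degree_pos[OF j(2,3)] a_mono j(2) by fastforce
  show "a 0 \<le> b 0"
  proof (rule ccontr)
    assume "\<not> a 0 \<le> b 0"
    then have f0: "f i 0 = 0" if "i < r" for i
      using hom_neg_eq_0[of "f i 0" "b i - a 0"] f_hom b_mono that by (force simp: c_eq)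
    have "g j = 0" if j: "1 \<le> j" "j < c" for j
    proof -
      \<comment> \<open>the Koszul syzygy \<open>g\<^sub>j e\<^sub>0 - g\<^sub>0 e\<^sub>j\<close> must come from \<open>f\<close>, whose first column vanishes\<close>
      define h where "h k = (if k = 0 then g j else if k = j then - g 0 else 0)" for k
      have "h k * g k = (if k = 0 then g j else 0) * g k + (if k = j then - g 0 else 0) * g k" for k
        using j by (simp add: h_def)
      then have "(\<Sum>k<c. h k * g k) = (\<Sum>k<c. (if k = 0 then g j else 0) * g k)
          + (\<Sum>k<c. (if k = j then - g 0 else 0) * g k)"
        by (simp add: sum.distrib)
      also have "(\<Sum>k<c. (if k = 0 then g j else 0) * g k) = g j * g 0"
        using j by (intro sum_if_eq_mult_left) auto
      also have "(\<Sum>k<c. (if k = j then - g 0 else 0) * g k) = - g 0 * g j"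
        using j by (intro sum_if_eq_mult_left) auto
      finally have "(\<Sum>k<c. h k * g k) = 0" by (simp add: mult.commute)
      then obtain u where "\<forall>k<c. h k = (\<Sum>i<r. u i * f i k)" using exact by blast
      then have "h 0 = 0" using f0 j by simp
      then show ?thesis using j by (simp add: h_def)
    qed
    then show False using later_generator_nonzero by blast
  qed
qed

end

end

lemma matrix_degree_ge_b0:
  assumes wo: "well_ordered M n" and n: "2 \<le> n"
    and N: "\<forall>i<n - 1. \<forall>j<n. M (i + 1) j = b i - a j"
    and sums: "(\<Sum>j<n. a j) = (\<Sum>i<n - 1. b i)"
  shows "b 0 \<le> matrix_degree M n"
proof -
  have n_Suc: "n = Suc (n - 1)" using n by simp
  have "matrix_degree M n = M 0 0 + (\<Sum>i<n - 1. M (Suc i) (Suc i))"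
    unfolding matrix_degree_def by (subst n_Suc, subst sum.lessThan_Suc_shift) simp
  also have "(\<Sum>i<n - 1. M (Suc i) (Suc i)) = (\<Sum>i<n - 1. b i) - (\<Sum>i<n - 1. a (Suc i))"
    using N by (simp add: sum_subtractf)
  also have "(\<Sum>i<n - 1. a (Suc i)) = (\<Sum>j<n. a j) - a 0"
    by (subst (2) n_Suc, subst sum.lessThan_Suc_shift) simp
  finally have "matrix_degree M n = M 0 0 + a 0" using sums by simp
  moreover have "M 1 0 \<le> M 0 0"
    using wo n unfolding well_ordered_def
    by (metis One_nat_def less_2_cases_iff less_le_trans numeral_2_eq_2 zero_less_one)
  moreover have "M 1 0 = b 0 - a 0"
    using N[rule_format, of 0 0] n by simp
  ultimately show ?thesis by simp
qed

theorem proposition5p8: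
  fixes M :: "nat \<Rightarrow> nat \<Rightarrow> int" and n :: nat and d :: int and I :: "poly3 set"
  assumes "homogeneous_matrix M n"
    and "well_ordered M n"
    and "matrix_degree M n = d"
    and "zero_dim_ideal I"
    and "dHB I (\<lambda>i j. M (i + 1) j) (n - 1) n"
  shows "hilb I (d - 1) = scheme_degree I"
proof -
  from assms(5) obtain a b f g where
    b_mono: "\<forall>i j. i \<le> j \<longrightarrow> j < n - 1 \<longrightarrow> b j \<le> b i" and
    a_mono: "\<forall>i j. i \<le> j \<longrightarrow> j < n \<longrightarrow> a j \<le> a i" and
    N: "\<forall>i<n - 1. \<forall>j<n. M (i + 1) j = b i - a j" and
    res: "\<forall>j<n. hom (g j) (a j)" "\<forall>i<n - 1. \<forall>j<n. hom (f i j) (b i - a j)"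
      "I = {(\<Sum>j<n. h j * g j) | h. True}"
      "\<forall>h. (\<Sum>j<n. h j * g j) = 0 \<longrightarrow> (\<exists>u. \<forall>j<n. h j = (\<Sum>i<n - 1. u i * f i j))"
      "\<forall>u. (\<forall>j<n. (\<Sum>i<n - 1. u i * f i j) = 0) \<longrightarrow> (\<forall>i<n - 1. u i = 0)"
    unfolding dHB_def by blast
  have "n \<noteq> 0"
  proof
    assume "n = 0"
    with res(3) have "I \<subseteq> {0}" by auto
    with zero_dim_ideal_not_subset_zero[OF assms(4)] show False ..
  qed
  then interpret hilbert_burch_resolution I "n - 1" n a b f g
    using res by unfold_locales auto
  have shape: "2 \<le> n" "1 \<le> a 0" "a 0 \<le> b 0"
    using resolution_shape[OF assms(4)] a_mono b_mono by auto
  have "b 0 \<le> d"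
    using matrix_degree_ge_b0[OF assms(2) shape(1) N degree_sums_eq[OF assms(4)]] assms(3) by simp
  then show ?thesis
    using hilb_eq_scheme_degree[OF assms(4), of "d - 1"] shape a_mono b_mono by force
qed

end
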